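(* Assume $\sigma_1(x)=\tfrac12\sigma_1''(0)\,x(x-a_1)$ and $\sigma_2(x)=\tfrac12\sigma_2''(0)\,x(x-a_2)$ with $\sigma_1''(0)\ne0$, $\sigma_2''(0)\ne0$ and real $0<a_2<a_1$. Let $\Lambda_q=q^{-2}\Big[1+\frac{(1-q^{-1})\tau'(0)}{\frac12\sigma_1''(0)}\Big]$ and $y_0=q^{-1}\Big[1-\frac{(1-q^{-1})}{a_1}\frac{\tau(0)}{\frac12\sigma_1''(0)}\Big]$, and assume $qy_0<0$ and $q^2\Lambda_q<0$. Put $a=a_2$, $b=q^{-1}a_1$, and suppose $q^{-N-1}a=b$ for some $N\in\mathbb{N}_0$. Let $$\rho(x)=|x|^{\alpha}\sqrt{x^{\log_qx-1}}\,(qa/x,\,x/b;q)_\infty,\qquad q^{\alpha}=-\frac{q^{-3}\sigma_2''(0)}{\sigma_1''(0)b}.$$ Then there exist polynomials $P_0,\dots,P_N$, with $P_n$ of degree $n$ a solution of the q-EHT with $\lambda=\lambda_n$, and nonzero constants $d_n^2$, such that for $m,n\in\{0,\dots,N\}$ $$\int_a^{b}P_n(x)P_m(x)\rho(x)\,d_{q^{-1}}x=d_n^2\delta_{mn},$$ i.e. orthogonality with respect to $\rho$ supported on $\{q^{-k}a\}_{k=0}^N$.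
   Context: Throughout $0<q<1$. For a function $y$ and $\zeta\in\{q,q^{-1}\}$, $D_\zeta y(x)=\frac{y(x)-y(\zeta x)}{(1-\zeta)x}$ for $x\ne0$ and $D_\zeta y(0)=y'(0)$; $[n]_q=\frac{1-q^n}{1-q}$. Let $\sigma_1$ be a real polynomial of degree at most two, $\tau(x)=\tau'(0)x+\tau(0)$ a real polynomial with $\tau'(0)\ne0$, and $\sigma_2(x):=q[\sigma_1(x)+(1-q^{-1})x\tau(x)]$. The q-EHT with parameter $n$ is $\sigma_1(x)D_{q^{-1}}D_qy(x)+\tau(x)D_qy(x)+\lambda_ny(x)=0$, $\lambda_n=-[n]_q\big(\tau'(0)+\tfrac12[n-1]_{q^{-1}}\sigma_1''(0)\big)$. $(\beta;q)_\infty=\prod_{k\ge0}(1-\beta q^k)$, $(\beta_1,\dots,\beta_r;q)_\infty=\prod_i(\beta_i;q)_\infty$. For $q^\alpha=c$ ($c\ne0$), $\alpha$ is any complex number with $e^{\alpha\ln q}=c$ and $|x|^\alpha:=e^{\alpha\ln|x|}$; for $x>0$, $\sqrt{x^{\log_qx-1}}:=\exp\big(\tfrac12(\log_qx-1)\ln x\big)$. For $a>0$ and $b=q^{-N-1}a$, $\int_a^{b}f(x)\,d_{q^{-1}}x=(q^{-1}-1)a\sum_{k=0}^{N}q^{-k}f(q^{-k}a)$. *)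

theory Defs
  imports "HOL-Analysis.Analysis" "HOL-Computational_Algebra.Polynomial"
begin

definition qD :: "real \<Rightarrow> (real \<Rightarrow> real) \<Rightarrow> real \<Rightarrow> real" where
  "qD z y x = (if x = 0 then deriv y 0 else (y x - y (z * x)) / ((1 - z) * x))"

text \<open>q-number [k]_q = (1 - q^k)/(1 - q), k an integer (k = n-1 may be -1).\<close>
definition qnum :: "real \<Rightarrow> int \<Rightarrow> real" where
  "qnum q k = (1 - q powi k) / (1 - q)"

definition qpoch_inf :: "real \<Rightarrow> real \<Rightarrow> real" where
  "qpoch_inf beta q = (\<Prod>k. 1 - beta * q ^ k)"

text \<open>Jackson q^-1 integral from a to b = q^(-N-1) a.\<close>
definition qinv_int :: "real \<Rightarrow> real \<Rightarrow> nat \<Rightarrow> (real \<Rightarrow> complex) \<Rightarrow> complex" where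
  "qinv_int q a N f = of_real ((1/q - 1) * a) * (\<Sum>k\<le>N. of_real ((1/q) ^ k) * f ((1/q) ^ k * a))"

end

theory Submission
  imports Defs
begin

text \<open>On monomials the q-EHT operator is triangular, \<open>x^k \<mapsto> \<mu>\<^sub>k x^k + \<nu>\<^sub>k x^(k-1)\<close>, and
  \<open>q\<^sup>2\<Lambda>\<^sub>q < 0\<close> makes the \<open>\<mu>\<^sub>k\<close> pairwise distinct, so the coefficient recurrence has a monic
  solution \<open>P\<^sub>n\<close> of degree \<open>n\<close> with eigenvalue \<open>\<mu>\<^sub>n = -\<lambda>\<^sub>n\<close>. At the nodes \<open>x\<^sub>k = q\<^sup>-\<^sup>k a\<close> the
  operator is a three-term difference operator
  \<open>A\<^sub>k (f x\<^sub>k\<^sub>+\<^sub>1 - f x\<^sub>k) + C\<^sub>k (f x\<^sub>k\<^sub>-\<^sub>1 - f x\<^sub>k)\<close> with \<open>A\<^sub>N = 0\<close> (\<open>x\<^sub>N = a\<^sub>1\<close> is a zero of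
  \<open>\<sigma>\<^sub>1\<close>) and \<open>C\<^sub>0 = 0\<close> (\<open>x\<^sub>0 = a\<^sub>2\<close> is a zero of \<open>\<sigma>\<^sub>2\<close>). The Jackson weights \<open>w\<^sub>k\<close> of \<open>\<rho>\<close>
  satisfy the Pearson relation \<open>w\<^sub>k A\<^sub>k = w\<^sub>k\<^sub>+\<^sub>1 C\<^sub>k\<^sub>+\<^sub>1\<close>, by \<open>(\<beta>;q)\<^sub>\<infinity> = (1-\<beta>) (\<beta>q;q)\<^sub>\<infinity>\<close> and the
  choice of \<open>q\<^sup>\<alpha>\<close>. Summation by parts then makes the operator symmetric for the Jackson sum, so
  eigenpolynomials with distinct eigenvalues are orthogonal. Finally \<open>\<sigma>\<^sub>1''(0) \<sigma>\<^sub>2''(0) < 0\<close> gives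
  \<open>q\<^sup>\<alpha> > 0\<close>, so the weights are positive and the norms do not vanish.\<close>

lemma qpoch_inf_convergent:
  fixes q \<beta> :: real
  assumes "0 < q" "q < 1" "0 \<le> \<beta>" "\<beta> < 1"
  shows "convergent_prod (\<lambda>k. 1 - \<beta> * q ^ k)"
proof -
  have "convergent_prod (\<lambda>k. 1 + (- \<beta> * q ^ k))"
  proof (rule summable_imp_convergent_prod_real)
    have "summable (\<lambda>k. \<beta> * q ^ k)"
      using assms by (intro summable_mult summable_geometric) auto
    then show "summable (\<lambda>k. \<bar>- \<beta> * q ^ k\<bar>)"
      using assms by (simp add: abs_mult)
    fix k
    have "\<beta> * q ^ k \<le> \<beta>" using assms by (simp add: mult_left_le power_le_one)
    then show "- \<beta> * q ^ k \<noteq> -1" using assms by auto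
  qed
  then show ?thesis by simp
qed

lemma qpoch_inf_pos:
  fixes q \<beta> :: real
  assumes "0 < q" "q < 1" "0 \<le> \<beta>" "\<beta> < 1"
  shows "0 < qpoch_inf \<beta> q"
  unfolding qpoch_inf_def
proof (rule less_0_prodinf[OF qpoch_inf_convergent[OF assms]])
  fix i
  have "\<beta> * q ^ i \<le> \<beta>" using assms by (simp add: mult_left_le power_le_one)
  then show "0 < 1 - \<beta> * q ^ i" using assms by auto
qed

lemma qpoch_inf_unfold:
  fixes q \<beta> :: real
  assumes "0 < q" "q < 1" "0 \<le> \<beta>" "\<beta> < 1"
  shows "qpoch_inf \<beta> q = (1 - \<beta>) * qpoch_inf (\<beta> * q) q"
proof -
  have "qpoch_inf (\<beta> * q) q = qpoch_inf \<beta> q / (1 - \<beta> * q ^ 0)"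
    unfolding qpoch_inf_def
    using prodinf_split_head[OF qpoch_inf_convergent[OF assms]] assms
    by (simp add: mult.assoc mult.commute)
  then show ?thesis using assms by (simp add: field_simps)
qed

definition qEHT_op :: "real \<Rightarrow> (real \<Rightarrow> real) \<Rightarrow> (real \<Rightarrow> real) \<Rightarrow> (real \<Rightarrow> real) \<Rightarrow> real \<Rightarrow> real" where
  "qEHT_op q \<sigma> \<tau> y x = \<sigma> x * qD (1/q) (qD q y) x + \<tau> x * qD q y x"

text \<open>\<open>diag_coeff q s1 t1 n\<close> is \<open>-\<lambda>\<^sub>n\<close>.\<close>

definition diag_coeff :: "real \<Rightarrow> real \<Rightarrow> real \<Rightarrow> nat \<Rightarrow> real" where
  "diag_coeff q s1 t1 k = qnum q (int k) * (t1 + 1/2 * qnum (1/q) (int k - 1) * s1)"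

definition shift_coeff :: "real \<Rightarrow> real \<Rightarrow> real \<Rightarrow> real \<Rightarrow> nat \<Rightarrow> real" where
  "shift_coeff q s1 t0 a1 k = qnum q (int k) * (t0 - s1 / 2 * a1 * qnum (1/q) (int k - 1))"

lemma qEHT_op_monomial:
  fixes q s1 t0 t1 a1 x :: real
  assumes q: "0 < q" "q \<noteq> 1" and x: "x \<noteq> 0"
  shows "qEHT_op q (\<lambda>x. s1 / 2 * x * (x - a1)) (\<lambda>x. t1 * x + t0) (\<lambda>w. w ^ k) x
       = diag_coeff q s1 t1 k * x ^ k + shift_coeff q s1 t0 a1 k * x ^ k / x"
proof (cases k)
  case 0
  then show ?thesis using x by (simp add: qEHT_op_def qD_def diag_coeff_def shift_coeff_def qnum_def)
next
  case (Suc j)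
  define p where "p = 1 - q"
  have p: "p \<noteq> 0" using q by (simp add: p_def)
  have Q: "q ^ j \<noteq> 0" using q by simp
  have powi: "q powi int (Suc j) = q * q ^ j" "(1/q) powi (int (Suc j) - 1) = 1 / q ^ j"
    by (simp del: of_nat_Suc) (simp add: power_divide)
  have e: "1 - 1/q = - p / q" "1 - 1 / q ^ j = (q ^ j - 1) / q ^ j"
    using q Q by (simp_all add: p_def field_simps)
  show ?thesis
    unfolding Suc qEHT_op_def qD_def diag_coeff_def shift_coeff_def qnum_def powi
    using x q p Q
    by (simp add: e p_def[symmetric] field_simps)
qed

lemma qD_sum:
  assumes "x \<noteq> 0"
  shows "qD z (\<lambda>w. \<Sum>i\<in>A. c i * f i w) x = (\<Sum>i\<in>A. c i * qD z (f i) x)"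
  using assms unfolding qD_def
  by (simp add: sum_subtractf[symmetric] sum_divide_distrib[symmetric] algebra_simps)

lemma qD_cong_at:
  assumes "x \<noteq> 0" "g x = h x" "g (z * x) = h (z * x)"
  shows "qD z g x = qD z h x"
  using assms by (simp add: qD_def)

lemma qEHT_op_sum:
  assumes q: "q \<noteq> 0" and x: "x \<noteq> 0"
  shows "qEHT_op q \<sigma> \<tau> (\<lambda>w. \<Sum>i\<in>A. c i * f i w) x = (\<Sum>i\<in>A. c i * qEHT_op q \<sigma> \<tau> (f i) x)"
proof -
  have x': "1/q * x \<noteq> 0" using q x by simp
  have "qD (1/q) (qD q (\<lambda>w. \<Sum>i\<in>A. c i * f i w)) x
      = qD (1/q) (\<lambda>y. \<Sum>i\<in>A. c i * qD q (f i) y) x"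
    by (rule qD_cong_at[where h = "\<lambda>y. \<Sum>i\<in>A. c i * qD q (f i) y", OF x qD_sum[OF x] qD_sum[OF x']])
  also have "\<dots> = (\<Sum>i\<in>A. c i * qD (1/q) (qD q (f i)) x)"
    by (rule qD_sum[OF x])
  finally show ?thesis
    unfolding qEHT_op_def qD_sum[OF x]
    by (simp add: sum_distrib_left sum.distrib algebra_simps)
qed

lemma poly_eq_sum_atMost:
  fixes p :: "'a::comm_semiring_1 poly"
  assumes "degree p \<le> n"
  shows "poly p x = (\<Sum>i\<le>n. coeff p i * x ^ i)"
proof -
  have "poly p x = (\<Sum>i\<le>degree p. coeff p i * x ^ i)" by (rule poly_altdef)
  also have "\<dots> = (\<Sum>i\<le>n. coeff p i * x ^ i)"
    using assms by (intro sum.mono_neutral_left) (auto simp: coeff_eq_0)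
  finally show ?thesis .
qed

lemma qEHT_op_poly:
  assumes q: "0 < q" "q \<noteq> 1" and x: "x \<noteq> 0" and deg: "degree p \<le> n"
  shows "qEHT_op q (\<lambda>x. s1 / 2 * x * (x - a1)) (\<lambda>x. t1 * x + t0) (poly p) x
       = (\<Sum>i\<le>n. coeff p i * (diag_coeff q s1 t1 i * x ^ i + shift_coeff q s1 t0 a1 i * x ^ i / x))"
proof -
  have p: "poly p = (\<lambda>w. \<Sum>i\<le>n. coeff p i * w ^ i)"
    using poly_eq_sum_atMost[OF deg] by auto
  have "qEHT_op q (\<lambda>x. s1 / 2 * x * (x - a1)) (\<lambda>x. t1 * x + t0) (poly p) x
      = (\<Sum>i\<le>n. coeff p i * qEHT_op q (\<lambda>x. s1 / 2 * x * (x - a1)) (\<lambda>x. t1 * x + t0) (\<lambda>w. w ^ i) x)"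
    unfolding p using qEHT_op_sum[of q x _ _ "coeff p" "\<lambda>i w. w ^ i" "{..n}"] q x by simp
  also have "\<dots> = (\<Sum>i\<le>n. coeff p i * (diag_coeff q s1 t1 i * x ^ i + shift_coeff q s1 t0 a1 i * x ^ i / x))"
    unfolding qEHT_op_monomial[OF q x] ..
  finally show ?thesis .
qed

lemma qEHT_op_poly_eigen:
  fixes p :: "real poly"
  assumes q: "0 < q" "q \<noteq> 1" and deg: "degree p \<le> n"
    and rec: "\<And>i. i < n \<Longrightarrow> (diag_coeff q s1 t1 i - diag_coeff q s1 t1 n) * coeff p i
                         + shift_coeff q s1 t0 a1 (Suc i) * coeff p (Suc i) = 0"
  shows "qEHT_op q (\<lambda>x. s1 / 2 * x * (x - a1)) (\<lambda>x. t1 * x + t0) (poly p) x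
       = diag_coeff q s1 t1 n * poly p x"
proof -
  define mu where "mu = diag_coeff q s1 t1"
  define nu where "nu = shift_coeff q s1 t0 a1"
  have coeff_high: "coeff p i = 0" if "n < i" for i
    using deg that by (simp add: coeff_eq_0)
  have mu0: "mu 0 = 0" and nu0: "nu 0 = 0" and nu1: "nu 1 = t0"
    using q by (simp_all add: mu_def nu_def diag_coeff_def shift_coeff_def qnum_def)
  have rec_all: "(mu i - mu n) * coeff p i + nu (Suc i) * coeff p (Suc i) = 0" for i
  proof (cases "i < n")
    case True
    then show ?thesis using rec unfolding mu_def nu_def by blast
  next
    case False
    then consider "i = n" | "n < i" by linarith
    then show ?thesis using coeff_high[of i] coeff_high[of "Suc i"] by cases auto
  qed
  show ?thesis
  proof (cases "x = 0")
    case True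
    have "deriv (poly p) 0 = poly (pderiv p) 0" by (rule DERIV_imp_deriv) simp
    then have "qD q (poly p) 0 = coeff p 1"
      by (simp add: qD_def poly_0_coeff_0 coeff_pderiv)
    moreover have "t0 * coeff p 1 = mu n * coeff p 0"
      using rec_all[of 0] mu0 nu1 by (simp add: algebra_simps)
    ultimately show ?thesis
      using True by (simp add: qEHT_op_def poly_0_coeff_0 mu_def)
  next
    case False
    define g where "g i = coeff p i * nu i * x ^ i / x" for i
    have "(\<Sum>i\<le>n. g i) = (\<Sum>i\<le>Suc n. g i)"
      using coeff_high[of "Suc n"] by (simp add: g_def)
    also have "\<dots> = (\<Sum>i\<le>n. coeff p (Suc i) * nu (Suc i) * x ^ i)"
      unfolding sum.atMost_Suc_shift using nu0 False by (simp add: g_def mult.assoc)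
    finally have shifted: "(\<Sum>i\<le>n. g i) = \<dots>" .
    have "(\<Sum>i\<le>n. coeff p i * (mu i * x ^ i + nu i * x ^ i / x)) - mu n * (\<Sum>i\<le>n. coeff p i * x ^ i)
       = (\<Sum>i\<le>n. ((mu i - mu n) * coeff p i) * x ^ i) + (\<Sum>i\<le>n. g i)"
      by (simp add: g_def sum_distrib_left sum.distrib sum_subtractf algebra_simps sum_divide_distrib)
    also have "\<dots> = (\<Sum>i\<le>n. ((mu i - mu n) * coeff p i + nu (Suc i) * coeff p (Suc i)) * x ^ i)"
      unfolding shifted by (simp add: sum.distrib[symmetric] algebra_simps)
    also have "\<dots> = 0" using rec_all by simp
    finally show ?thesis
      using qEHT_op_poly[OF q False deg] poly_eq_sum_atMost[OF deg]
      by (simp add: mu_def nu_def)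
  qed
qed

text \<open>\<open>eigenpoly_coeff mu nu n j\<close> is the coefficient of \<open>x ^ (n - j)\<close>: the recurrence
  \<open>(mu i - mu n) c i + nu (i + 1) c (i + 1) = 0\<close> is solved downwards from \<open>c n = 1\<close>.\<close>

fun eigenpoly_coeff :: "(nat \<Rightarrow> real) \<Rightarrow> (nat \<Rightarrow> real) \<Rightarrow> nat \<Rightarrow> nat \<Rightarrow> real" where
  "eigenpoly_coeff mu nu n 0 = 1"
| "eigenpoly_coeff mu nu n (Suc j) = nu (n - j) * eigenpoly_coeff mu nu n j / (mu n - mu (n - Suc j))"

definition eigenpoly :: "(nat \<Rightarrow> real) \<Rightarrow> (nat \<Rightarrow> real) \<Rightarrow> nat \<Rightarrow> real poly" where
  "eigenpoly mu nu n = Poly (map (\<lambda>i. eigenpoly_coeff mu nu n (n - i)) [0..<Suc n])"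

lemma coeff_eigenpoly:
  "coeff (eigenpoly mu nu n) i = (if i \<le> n then eigenpoly_coeff mu nu n (n - i) else 0)"
  unfolding eigenpoly_def by (auto simp: nth_default_def nth_append simp del: upt_Suc)

lemma degree_eigenpoly: "degree (eigenpoly mu nu n) = n"
proof (rule antisym)
  show "degree (eigenpoly mu nu n) \<le> n" by (rule degree_le) (simp add: coeff_eigenpoly)
  show "n \<le> degree (eigenpoly mu nu n)" by (rule le_degree) (simp add: coeff_eigenpoly)
qed

lemma eigenpoly_nonzero: "eigenpoly mu nu n \<noteq> 0"
proof
  assume "eigenpoly mu nu n = 0"
  then have "coeff (eigenpoly mu nu n) n = 0" by simp
  then show False by (simp add: coeff_eigenpoly)
qed

lemma eigenpoly_recurrence:
  assumes "i < n" "mu i \<noteq> mu n"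
  shows "(mu i - mu n) * coeff (eigenpoly mu nu n) i + nu (Suc i) * coeff (eigenpoly mu nu n) (Suc i) = 0"
proof -
  define j where "j = n - Suc i"
  have nj: "n - i = Suc j" "n - j = Suc i" "n - Suc j = i" using assms(1) unfolding j_def by auto
  have "coeff (eigenpoly mu nu n) i = nu (Suc i) * coeff (eigenpoly mu nu n) (Suc i) / (mu n - mu i)"
    using assms(1) by (simp add: coeff_eigenpoly nj j_def[symmetric])
  then show ?thesis using assms(2) by (simp add: field_simps)
qed

lemma diag_coeff_closed_form:
  assumes q: "0 < q" "q < 1"
  shows "diag_coeff q s1 t1 n
       = (1 - q^n) * ((t1 * (1 - q) - s1/2 * q) * q^n + s1/2 * q^2) / (q^n * (1 - q)^2)"
proof (cases n)
  case 0
  then show ?thesis by (simp add: diag_coeff_def qnum_def)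
next
  case (Suc j)
  define p where "p = 1 - q"
  have p: "p \<noteq> 0" "q \<noteq> 0" using q by (auto simp: p_def)
  have Q: "q ^ j \<noteq> 0" using q by simp
  have powi: "q powi int (Suc j) = q * q ^ j" "(1/q) powi (int (Suc j) - 1) = 1 / q ^ j"
    by (simp del: of_nat_Suc) (simp add: power_divide)
  have e: "1 - 1/q = - p / q" "1 - 1 / q ^ j = (q ^ j - 1) / q ^ j"
    using q Q by (simp_all add: p_def field_simps)
  show ?thesis
    unfolding Suc diag_coeff_def qnum_def powi power_Suc e p_def[symmetric]
    using p Q by (simp add: field_simps power2_eq_square)
qed

text \<open>This is where \<open>q\<^sup>2 \<Lambda>\<^sub>q < 0\<close> enters: it makes the eigenvalues pairwise distinct.\<close>

lemma diag_coeff_inj: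
  assumes q: "0 < q" "q < 1"
    and Lambda: "1 + (1 - 1/q) * t1 / (s1 / 2) < 0"
    and "n \<noteq> m"
  shows "diag_coeff q s1 t1 n \<noteq> diag_coeff q s1 t1 m"
proof
  assume eq: "diag_coeff q s1 t1 n = diag_coeff q s1 t1 m"
  define s where "s = s1 / 2"
  define K where "K = t1 * (1 - q) - s * q"
  define u where "u = q ^ n"
  define v where "v = q ^ m"
  define p where "p = 1 - q"
  have p: "p \<noteq> 0" using q by (simp add: p_def)
  have s: "s \<noteq> 0" using Lambda by (auto simp: s_def)
  have u: "u > 0" and v: "v > 0" using q by (simp_all add: u_def v_def)
  have "s^2 * (1 + (1 - 1/q) * t1 / s) < 0"
    using Lambda s by (simp add: s_def mult_pos_neg)
  moreover have "K * s = - q * (s^2 * (1 + (1 - 1/q) * t1 / s))"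
    using q s unfolding K_def by (simp add: field_simps power2_eq_square)
  ultimately have Ks: "K * s > 0" using q by (simp add: mult_pos_neg)
  have "diag_coeff q s1 t1 n - diag_coeff q s1 t1 m = (v - u) * (s * q^2 / (u * v) + K) / (1 - q)^2"
    unfolding diag_coeff_closed_form[OF q] u_def[symmetric] v_def[symmetric] s_def[symmetric]
      K_def[symmetric] p_def[symmetric]
    using u v p by (simp add: field_simps power2_eq_square) (simp add: K_def p_def algebra_simps)
  then have "(v - u) * (s * q^2 / (u * v) + K) = 0" using eq q by simp
  moreover have "s * (s * q^2 / (u * v) + K) > 0"
  proof -
    have "s * (s * q^2 / (u * v) + K) = s^2 * q^2 / (u * v) + K * s"
      by (simp add: algebra_simps power2_eq_square)
    moreover have "s^2 * q^2 / (u * v) > 0" using u v q s by simp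
    ultimately show ?thesis using Ks by simp
  qed
  ultimately have "q ^ m = q ^ n" by (auto simp: u_def v_def)
  then show False using \<open>n \<noteq> m\<close> q by (simp add: power_inject_exp')
qed

lemma eigenpoly_solves_qEHT:
  assumes q: "0 < q" "q < 1" and Lambda: "1 + (1 - 1/q) * t1 / (s1 / 2) < 0"
  shows "qEHT_op q (\<lambda>x. s1 / 2 * x * (x - a1)) (\<lambda>x. t1 * x + t0)
           (poly (eigenpoly (diag_coeff q s1 t1) (shift_coeff q s1 t0 a1) n)) x
       = diag_coeff q s1 t1 n * poly (eigenpoly (diag_coeff q s1 t1) (shift_coeff q s1 t0 a1) n) x"
  by (rule qEHT_op_poly_eigen)
     (use q diag_coeff_inj[OF q Lambda] in \<open>auto simp: degree_eigenpoly intro: eigenpoly_recurrence\<close>)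

lemma qEHT_op_difference_form:
  assumes q: "q \<noteq> 0" "q \<noteq> 1" and X: "X \<noteq> 0"
  shows "qEHT_op q \<sigma> \<tau> f X
     = q^2 * \<sigma> X / ((1 - q)^2 * X^2) * (f (X / q) - f X)
       + (q * \<sigma> X - (1 - q) * X * \<tau> X) / ((1 - q)^2 * X^2) * (f (q * X) - f X)"
proof -
  define p where "p = 1 - q"
  have p: "p \<noteq> 0" using q by (simp add: p_def)
  have X': "1/q * X \<noteq> 0" using X q by simp
  have e: "q * (1/q * X) = X" "1 - 1/q = - p / q" "1/q * X = X / q"
    using q by (simp_all add: p_def field_simps)
  show ?thesis
    unfolding qEHT_op_def qD_def if_not_P[OF X] if_not_P[OF X'] e p_def[symmetric]
    using p q X by (simp add: field_simps power2_eq_square)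
qed

lemma sum_by_parts_three_term:
  fixes r A C f g :: "nat \<Rightarrow> real"
  assumes A: "A N = 0" and C: "C 0 = 0"
    and sym: "\<And>k. k < N \<Longrightarrow> r k * A k = r (Suc k) * C (Suc k)"
  shows "(\<Sum>k\<le>N. r k * (A k * (f (Suc k) - f k) + C k * (f (k - 1) - f k)) * g k)
       = - (\<Sum>k<N. r k * A k * (f (Suc k) - f k) * (g (Suc k) - g k))"
proof -
  have forward: "(\<Sum>k\<le>N. r k * A k * (f (Suc k) - f k) * g k)
      = (\<Sum>k<N. r k * A k * (f (Suc k) - f k) * g k)"
    unfolding lessThan_Suc_atMost[symmetric] using A by simp
  have "(\<Sum>k\<le>N. r k * C k * (f (k - 1) - f k) * g k)
      = (\<Sum>k<N. r (Suc k) * C (Suc k) * (f k - f (Suc k)) * g (Suc k))"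
    unfolding lessThan_Suc_atMost[symmetric] sum.lessThan_Suc_shift using C by simp
  also have "\<dots> = (\<Sum>k<N. r k * A k * (f k - f (Suc k)) * g (Suc k))"
    using sym by (intro sum.cong) auto
  finally have backward: "(\<Sum>k\<le>N. r k * C k * (f (k - 1) - f k) * g k) = \<dots>" .
  have "(\<Sum>k\<le>N. r k * (A k * (f (Suc k) - f k) + C k * (f (k - 1) - f k)) * g k)
      = (\<Sum>k\<le>N. r k * A k * (f (Suc k) - f k) * g k) + (\<Sum>k\<le>N. r k * C k * (f (k - 1) - f k) * g k)"
    by (simp add: sum.distrib[symmetric] algebra_simps)
  also have "\<dots> = - (\<Sum>k<N. r k * A k * (f (Suc k) - f k) * (g (Suc k) - g k))"
    unfolding forward backward by (simp add: sum.distrib[symmetric] sum_negf[symmetric] algebra_simps)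
  finally show ?thesis .
qed

lemma three_term_eigenvectors_orthogonal:
  fixes r A C f g :: "nat \<Rightarrow> real"
  assumes A: "A N = 0" and C: "C 0 = 0"
    and sym: "\<And>k. k < N \<Longrightarrow> r k * A k = r (Suc k) * C (Suc k)"
    and f: "\<And>k. k \<le> N \<Longrightarrow> \<kappa> * f k = A k * (f (Suc k) - f k) + C k * (f (k - 1) - f k)"
    and g: "\<And>k. k \<le> N \<Longrightarrow> \<mu> * g k = A k * (g (Suc k) - g k) + C k * (g (k - 1) - g k)"
    and "\<kappa> \<noteq> \<mu>"
  shows "(\<Sum>k\<le>N. r k * f k * g k) = 0"
proof -
  define T where "T u v = (\<Sum>k<N. r k * A k * (u (Suc k) - u k) * (v (Suc k) - v k))" for u v
  have "\<kappa> * (\<Sum>k\<le>N. r k * f k * g k) = (\<Sum>k\<le>N. r k * (\<kappa> * f k) * g k)"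
    by (simp add: sum_distrib_left algebra_simps)
  also have "\<dots> = (\<Sum>k\<le>N. r k * (A k * (f (Suc k) - f k) + C k * (f (k - 1) - f k)) * g k)"
    using f by (intro sum.cong) auto
  also have "\<dots> = - T f g"
    unfolding T_def by (rule sum_by_parts_three_term[OF A C sym])
  finally have "\<kappa> * (\<Sum>k\<le>N. r k * f k * g k) = - T f g" .
  moreover have "\<mu> * (\<Sum>k\<le>N. r k * f k * g k) = (\<Sum>k\<le>N. r k * (\<mu> * g k) * f k)"
    by (simp add: sum_distrib_left algebra_simps)
  moreover have "\<dots> = (\<Sum>k\<le>N. r k * (A k * (g (Suc k) - g k) + C k * (g (k - 1) - g k)) * f k)"
    using g by (intro sum.cong) auto
  moreover have "\<dots> = - T g f"
    unfolding T_def by (rule sum_by_parts_three_term[OF A C sym])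
  moreover have "T g f = T f g" unfolding T_def by (simp add: algebra_simps)
  ultimately have "(\<kappa> - \<mu>) * (\<Sum>k\<le>N. r k * f k * g k) = 0" by (simp add: algebra_simps)
  then show ?thesis using \<open>\<kappa> \<noteq> \<mu>\<close> by simp
qed

lemma exp_half_log_ln_div:
  fixes q X :: real
  assumes "0 < q" "q \<noteq> 1" "0 < X"
  shows "exp (1/2 * (log q (X / q) - 1) * ln (X / q)) = exp (1/2 * (log q X - 1) * ln X) * q / X"
proof -
  have "ln q \<noteq> 0" using assms by simp
  then have h: "1/2 * (log q (X / q) - 1) * ln (X / q) = 1/2 * (log q X - 1) * ln X + (ln q - ln X)"
    unfolding log_def using assms by (simp add: ln_div field_simps)
  show ?thesis unfolding h exp_add using assms by (simp add: exp_diff)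
qed

lemma poly_nonzero_at_some_point:
  fixes p :: "'a::idom poly" and g :: "nat \<Rightarrow> 'a"
  assumes "p \<noteq> 0" "degree p \<le> N" "inj_on g {..N}"
  shows "\<exists>k\<le>N. poly p (g k) \<noteq> 0"
proof (rule ccontr)
  assume "\<not> ?thesis"
  then have "g ` {..N} \<subseteq> {x. poly p x = 0}" by auto
  then have "card (g ` {..N}) \<le> card {x. poly p x = 0}"
    using poly_roots_finite[OF assms(1)] by (rule card_mono[rotated])
  also have "\<dots> \<le> N" using card_poly_roots_bound[OF assms(1)] assms(2) by simp
  finally show False using card_image[OF assms(3)] by simp
qed

locale qEHT_lattice =
  fixes q s1 s2 t0 t1 a1 a2 :: real and N :: nat and \<sigma>1 \<tau> :: "real \<Rightarrow> real"
  assumes q_pos: "0 < q" and q_less_1: "q < 1"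
    and \<sigma>1_eq: "\<And>x. \<sigma>1 x = s1 / 2 * x * (x - a1)"
    and \<tau>_eq: "\<And>x. \<tau> x = t1 * x + t0"
    and \<sigma>2_eq: "\<And>x. q * (\<sigma>1 x + (1 - 1/q) * x * \<tau> x) = s2 / 2 * x * (x - a2)"
    and a2_pos: "0 < a2" and a2_less_a1: "a2 < a1"
    and Lambda_neg: "1 + (1 - 1/q) * t1 / (s1 / 2) < 0"
    and lattice_end: "(1/q) ^ (N + 1) * a2 = a1 / q"
begin

definition node :: "nat \<Rightarrow> real" where
  "node k = (1/q) ^ k * a2"

definition qalpha :: real where
  "qalpha = - ((1/q)^3 * s2) / (s1 * (a1 / q))"

text \<open>As \<open>\<bar>node k\<bar>\<^sup>\<alpha> = a2\<^sup>\<alpha> / qalpha ^ k\<close>, \<open>weight k\<close> is the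
  Jackson factor \<open>q\<^sup>-\<^sup>k\<close> times \<open>\<rho>(node k) / a2\<^sup>\<alpha>\<close>.\<close>

definition weight :: "nat \<Rightarrow> real" where
  "weight k = (1/q) ^ k / qalpha ^ k * exp (1/2 * (log q (node k) - 1) * ln (node k))
     * qpoch_inf (q * a2 / node k) q * qpoch_inf (node k / (a1 / q)) q"

definition up_coeff :: "nat \<Rightarrow> real" where
  "up_coeff k = q^2 * \<sigma>1 (node k) / ((1 - q)^2 * node k ^ 2)"

definition down_coeff :: "nat \<Rightarrow> real" where
  "down_coeff k = s2 / 2 * node k * (node k - a2) / ((1 - q)^2 * node k ^ 2)"

lemma node_pos: "0 < node k"
  using q_pos a2_pos by (simp add: node_def)

lemma node_Suc: "node (Suc k) = node k / q"
  by (simp add: node_def)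

lemma q_mult_node_Suc: "q * node (Suc k) = node k"
  using q_pos by (simp add: node_def)

lemma node_0: "node 0 = a2"
  by (simp add: node_def)

lemma node_N: "node N = a1"
  using lattice_end q_pos by (simp add: node_def)

lemma node_inj: "inj node"
proof (rule injI)
  fix i j assume "node i = node j"
  then have "(1/q) ^ i = (1/q) ^ j" using a2_pos by (simp add: node_def)
  then show "i = j" using q_pos q_less_1 by (simp add: power_inject_exp')
qed

lemma node_bounds:
  assumes "k \<le> N"
  shows "q * a2 < node k" "q * node k < a1"
proof -
  have "a2 \<le> node k" using q_pos q_less_1 a2_pos by (simp add: node_def one_le_power)
  then show "q * a2 < node k" using q_less_1 a2_pos by (smt (verit) mult_le_cancel_right1)
  have "node k \<le> node N"
    using q_pos q_less_1 a2_pos assms by (simp add: node_def power_increasing)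
  then show "q * node k < a1"
    using node_N node_pos[of k] q_less_1 by (smt (verit) mult_le_cancel_right1 mult.commute)
qed

lemma \<sigma>2_eq': "q * \<sigma>1 x - (1 - q) * x * \<tau> x = s2 / 2 * x * (x - a2)"
proof -
  have "q * (\<sigma>1 x + (1 - 1/q) * x * \<tau> x) = q * \<sigma>1 x - (1 - q) * x * \<tau> x"
    using q_pos by (simp add: field_simps)
  then show ?thesis using \<sigma>2_eq by simp
qed

lemma s2_eq: "s2 = q * s1 - 2 * (1 - q) * t1"
proof -
  have "(q * \<sigma>1 1 - (1 - q) * 1 * \<tau> 1) + (q * \<sigma>1 (-1) - (1 - q) * (-1) * \<tau> (-1))
      = s2 / 2 * 1 * (1 - a2) + s2 / 2 * (-1) * (-1 - a2)"
    by (simp only: \<sigma>2_eq')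
  then show ?thesis by (simp add: \<sigma>1_eq \<tau>_eq field_simps)
qed

lemma qalpha_pos: "0 < qalpha"
proof -
  have s1: "s1 \<noteq> 0" using Lambda_neg by auto
  have "s1 * s2 = q * s1^2 * (1 + (1 - 1/q) * t1 / (s1 / 2))"
    unfolding s2_eq using s1 q_pos by (simp add: field_simps power2_eq_square)
  also have "\<dots> < 0" using Lambda_neg q_pos s1 by (simp add: mult_pos_neg)
  finally have "s1 * s2 < 0" .
  moreover have "qalpha = - (s1 * s2) / (s1^2 * (a1 * q^2))"
    unfolding qalpha_def using q_pos s1 by (simp add: field_simps power2_eq_square power3_eq_cube)
  moreover have "0 < s1^2 * (a1 * q^2)" using s1 a2_pos a2_less_a1 q_pos by simp
  ultimately show ?thesis by (simp add: divide_neg_pos)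
qed

lemma weight_pos:
  assumes "k \<le> N"
  shows "0 < weight k"
proof -
  have "0 < qpoch_inf (q * a2 / node k) q"
    using node_bounds(1)[OF assms] node_pos[of k] q_pos q_less_1 a2_pos
    by (intro qpoch_inf_pos) simp_all
  moreover have "0 < qpoch_inf (node k / (a1 / q)) q"
    using node_bounds(2)[OF assms] node_pos[of k] q_pos q_less_1 a2_pos a2_less_a1
    by (intro qpoch_inf_pos) (simp_all add: field_simps)
  ultimately show ?thesis
    using q_pos qalpha_pos by (simp add: weight_def)
qed

lemma qpoch_inf_node_Suc:
  assumes k: "k < N"
  shows "qpoch_inf (q * a2 / node k) q = (1 - q * a2 / node k) * qpoch_inf (q * a2 / node (Suc k)) q"
    and "qpoch_inf (node (Suc k) / (a1 / q)) q
         = (1 - node (Suc k) / (a1 / q)) * qpoch_inf (node k / (a1 / q)) q"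
proof -
  have "0 \<le> q * a2 / node k" "q * a2 / node k < 1"
    using node_bounds(1)[of k] k node_pos[of k] q_pos a2_pos by simp_all
  moreover have "q * a2 / node k * q = q * a2 / node (Suc k)"
    using q_pos by (simp add: node_Suc field_simps)
  ultimately show "qpoch_inf (q * a2 / node k) q
      = (1 - q * a2 / node k) * qpoch_inf (q * a2 / node (Suc k)) q"
    using qpoch_inf_unfold[OF q_pos q_less_1] by metis
  have "0 \<le> node (Suc k) / (a1 / q)" "node (Suc k) / (a1 / q) < 1"
    using node_bounds(2)[of "Suc k"] k node_pos[of "Suc k"] q_pos a2_pos a2_less_a1
    by (simp_all add: field_simps)
  moreover have "node (Suc k) / (a1 / q) * q = node k / (a1 / q)"
    using q_pos by (simp add: node_Suc field_simps)
  ultimately show "qpoch_inf (node (Suc k) / (a1 / q)) q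
      = (1 - node (Suc k) / (a1 / q)) * qpoch_inf (node k / (a1 / q)) q"
    using qpoch_inf_unfold[OF q_pos q_less_1] by metis
qed

lemma weight_pearson_sigma:
  assumes k: "k < N"
  shows "weight k * \<sigma>1 (node k) = weight (Suc k) * (s2 / 2 * node (Suc k) * (node (Suc k) - a2))"
proof -
  define X where "X = node k"
  have X: "0 < X" using node_pos by (simp add: X_def)
  have q: "q \<noteq> 0" and q_neq_1: "q \<noteq> 1" using q_pos q_less_1 by simp_all
  have a1: "a1 \<noteq> 0" using a2_pos a2_less_a1 by simp
  have s1: "s1 \<noteq> 0" using Lambda_neg by auto
  have s2: "s2 \<noteq> 0" using qalpha_pos by (auto simp: qalpha_def)
  have X_Suc: "node (Suc k) = X / q" by (simp add: X_def node_Suc)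
  note lower = qpoch_inf_node_Suc(1)[OF k, folded X_def, unfolded X_Suc]
  note upper = qpoch_inf_node_Suc(2)[OF k, folded X_def, unfolded X_Suc]
  have weight_k: "weight k = (1/q)^k / qalpha^k * exp (1/2 * (log q X - 1) * ln X)
      * qpoch_inf (q * a2 / X) q * qpoch_inf (X / (a1/q)) q"
    unfolding weight_def X_def ..
  have weight_Suc: "weight (Suc k) = (1/q)^k / qalpha^k * ((1/q) / qalpha)
      * (exp (1/2 * (log q X - 1) * ln X) * q / X)
      * qpoch_inf (q * a2 / (X/q)) q * qpoch_inf ((X/q) / (a1/q)) q"
    using q_less_1 unfolding weight_def X_Suc exp_half_log_ln_div[OF q_pos q_neq_1 X]
    by (simp add: field_simps)
  have "z * e * ((1 - q * a2 / X) * A) * B * (s1 / 2 * X * (X - a1))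
      = z * ((1/q) / qalpha) * (e * q / X) * A * ((1 - (X/q) / (a1/q)) * B) * (s2 / 2 * (X/q) * (X/q - a2))"
    for z e A B
    unfolding qalpha_def using q X a1 s1 s2 by (simp add: field_simps power3_eq_cube)
  then show ?thesis
    unfolding weight_k weight_Suc lower upper \<sigma>1_eq X_def[symmetric] X_Suc
    by (simp add: mult.assoc)
qed

lemma weight_pearson:
  assumes "k < N"
  shows "weight k * up_coeff k = weight (Suc k) * down_coeff (Suc k)"
proof -
  define X where "X = node k"
  have X: "X \<noteq> 0" using node_pos[of k] by (simp add: X_def)
  have "weight (Suc k) * down_coeff (Suc k)
      = q^2 / ((1 - q)^2 * X^2) * (weight (Suc k) * (s2 / 2 * node (Suc k) * (node (Suc k) - a2)))"
    unfolding down_coeff_def node_Suc X_def[symmetric] using X q_pos q_less_1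
    by (simp add: field_simps power2_eq_square)
  also have "\<dots> = weight k * up_coeff k"
    unfolding weight_pearson_sigma[OF assms, symmetric] up_coeff_def X_def by (simp add: field_simps)
  finally show ?thesis ..
qed

lemma qEHT_op_on_node:
  "qEHT_op q \<sigma>1 \<tau> f (node k)
     = up_coeff k * (f (node (Suc k)) - f (node k)) + down_coeff k * (f (node (k - 1)) - f (node k))"
proof -
  have "qEHT_op q \<sigma>1 \<tau> f (node k)
      = up_coeff k * (f (node (Suc k)) - f (node k)) + down_coeff k * (f (q * node k) - f (node k))"
    using qEHT_op_difference_form[of q "node k" \<sigma>1 \<tau> f] node_pos[of k] q_pos q_less_1
    unfolding up_coeff_def down_coeff_def \<sigma>2_eq' node_Suc by simp
  moreover have "down_coeff k * (f (q * node k) - f (node k)) = down_coeff k * (f (node (k - 1)) - f (node k))"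
    by (cases k) (simp_all add: down_coeff_def node_0 q_mult_node_Suc)
  ultimately show ?thesis by simp
qed

lemma qEHT_eigenfunctions_orthogonal:
  assumes f: "\<And>x. qEHT_op q \<sigma>1 \<tau> f x = \<kappa> * f x"
    and g: "\<And>x. qEHT_op q \<sigma>1 \<tau> g x = \<mu> * g x"
    and "\<kappa> \<noteq> \<mu>"
  shows "(\<Sum>k\<le>N. weight k * f (node k) * g (node k)) = 0"
proof (rule three_term_eigenvectors_orthogonal[where A = up_coeff and C = down_coeff])
  show "up_coeff N = 0" by (simp add: up_coeff_def node_N \<sigma>1_eq)
  show "down_coeff 0 = 0" by (simp add: down_coeff_def node_0)
  show "weight k * up_coeff k = weight (Suc k) * down_coeff (Suc k)" if "k < N" for k
    using that by (rule weight_pearson)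
  show "\<kappa> * f (node k) = up_coeff k * (f (node (Suc k)) - f (node k))
      + down_coeff k * (f (node (k - 1)) - f (node k))" for k
    using f[of "node k"] qEHT_op_on_node[of f k] by simp
  show "\<mu> * g (node k) = up_coeff k * (g (node (Suc k)) - g (node k))
      + down_coeff k * (g (node (k - 1)) - g (node k))" for k
    using g[of "node k"] qEHT_op_on_node[of g k] by simp
qed (rule \<open>\<kappa> \<noteq> \<mu>\<close>)

lemma weighted_norm_pos:
  fixes p :: "real poly"
  assumes "p \<noteq> 0" "degree p \<le> N"
  shows "0 < (\<Sum>k\<le>N. weight k * poly p (node k) * poly p (node k))"
proof -
  obtain k0 where k0: "k0 \<le> N" "poly p (node k0) \<noteq> 0"
    using poly_nonzero_at_some_point[OF assms inj_on_subset[OF node_inj]] by blast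
  show ?thesis
  proof (rule sum_pos2)
    have "0 < poly p (node k0) * poly p (node k0)"
      using k0(2) not_real_square_gt_zero by blast
    then show "0 < weight k0 * poly p (node k0) * poly p (node k0)"
      using weight_pos[OF k0(1)] by (simp add: mult.assoc)
    show "0 \<le> weight k * poly p (node k) * poly p (node k)" if "k \<in> {..N}" for k
      using weight_pos[of k] that by (simp add: mult.assoc)
  qed (use k0 in auto)
qed

lemma qinv_int_eq_weighted_sum:
  assumes alpha: "exp (\<alpha> * of_real (ln q)) = of_real qalpha"
  shows "qinv_int q a2 N (\<lambda>x. of_real (f x) * (exp (\<alpha> * of_real (ln \<bar>x\<bar>)) *
           of_real (exp (1/2 * (log q x - 1) * ln x) * qpoch_inf (q * a2 / x) q * qpoch_inf (x / (a1 / q)) q)))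
       = of_real ((1/q - 1) * a2) * exp (\<alpha> * of_real (ln a2)) * of_real (\<Sum>k\<le>N. weight k * f (node k))"
proof -
  define C where "C = exp (\<alpha> * of_real (ln a2))"
  have ln_node: "ln \<bar>node k\<bar> = ln a2 - real k * ln q" for k
    using q_pos a2_pos by (simp add: node_def ln_mult ln_realpow ln_div)
  have "\<alpha> * of_real (ln \<bar>node k\<bar>) = \<alpha> * of_real (ln a2) - of_nat k * (\<alpha> * of_real (ln q))" for k
    unfolding ln_node by (simp add: algebra_simps)
  then have power_alpha: "exp (\<alpha> * of_real (ln \<bar>node k\<bar>)) = C / of_real qalpha ^ k" for k
    unfolding C_def by (simp add: exp_diff exp_of_nat_mult alpha)
  have "of_real ((1/q) ^ k) * (of_real (f (node k)) * (exp (\<alpha> * of_real (ln \<bar>node k\<bar>)) *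
          of_real (exp (1/2 * (log q (node k) - 1) * ln (node k))
                   * qpoch_inf (q * a2 / node k) q * qpoch_inf (node k / (a1 / q)) q)))
      = C * of_real (weight k * f (node k))" for k
    unfolding power_alpha weight_def using qalpha_pos by (simp add: field_simps)
  note summand = this
  show ?thesis
    unfolding qinv_int_def node_def[symmetric] summand C_def[symmetric]
    by (simp add: sum_distrib_left mult.assoc)
qed

end

theorem theorem4p12:
  fixes q s1 s2 t0 t1 a1 a2 :: real and N :: nat and \<alpha> :: complex
    and \<sigma>1 \<tau> :: "real \<Rightarrow> real"
  assumes q: "0 < q" "q < 1"
    and \<sigma>1_def: "\<forall>x. \<sigma>1 x = s1 / 2 * x * (x - a1)"
    and \<tau>_def: "\<forall>x. \<tau> x = t1 * x + t0"
    and t1: "t1 \<noteq> 0"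
    and s1: "s1 \<noteq> 0" and s2: "s2 \<noteq> 0"
    and \<sigma>2: "\<forall>x. q * (\<sigma>1 x + (1 - 1/q) * x * \<tau> x) = s2 / 2 * x * (x - a2)"
    and a: "0 < a2" "a2 < a1"
    and y0: "q * ((1/q) * (1 - (1 - 1/q) / a1 * (t0 / (s1 / 2)))) < 0"
    and Lq: "q^2 * ((1/q)^2 * (1 + (1 - 1/q) * t1 / (s1 / 2))) < 0"
    and N: "(1/q) ^ (N + 1) * a2 = a1 / q"
    and alpha: "exp (\<alpha> * of_real (ln q)) = of_real (- ((1/q)^3 * s2) / (s1 * (a1 / q)))"
  shows "\<exists>(P :: nat \<Rightarrow> real poly) (d :: nat \<Rightarrow> complex).
    (\<forall>n\<le>N. degree (P n) = n \<and> d n \<noteq> 0 \<and>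
       (\<forall>x. \<sigma>1 x * qD (1/q) (qD q (poly (P n))) x + \<tau> x * qD q (poly (P n)) x
            + (- qnum q (int n) * (t1 + 1/2 * qnum (1/q) (int n - 1) * s1)) * poly (P n) x = 0)) \<and>
    (\<forall>m\<le>N. \<forall>n\<le>N.
       qinv_int q a2 N (\<lambda>x. of_real (poly (P n) x * poly (P m) x) *
          (exp (\<alpha> * of_real (ln \<bar>x\<bar>)) *
           of_real (exp (1/2 * (log q x - 1) * ln x)
                    * qpoch_inf (q * a2 / x) q * qpoch_inf (x / (a1 / q)) q)))
       = (if m = n then d n else 0))"
proof -
  have Lambda: "1 + (1 - 1/q) * t1 / (s1 / 2) < 0"
    using Lq q by (simp add: power_divide)
  interpret qEHT_lattice q s1 s2 t0 t1 a1 a2 N \<sigma>1 \<tau>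
    using q a Lambda N \<sigma>1_def \<tau>_def \<sigma>2 by unfold_locales auto
  have \<sigma>1_fun: "\<sigma>1 = (\<lambda>x. s1 / 2 * x * (x - a1))" and \<tau>_fun: "\<tau> = (\<lambda>x. t1 * x + t0)"
    using \<sigma>1_def \<tau>_def by auto
  define P where "P = eigenpoly (diag_coeff q s1 t1) (shift_coeff q s1 t0 a1)"
  define d :: "nat \<Rightarrow> complex" where
    "d n = of_real ((1/q - 1) * a2) * exp (\<alpha> * of_real (ln a2))
           * of_real (\<Sum>k\<le>N. weight k * (poly (P n) (node k) * poly (P n) (node k)))" for n
  have eigen: "qEHT_op q \<sigma>1 \<tau> (poly (P n)) x = diag_coeff q s1 t1 n * poly (P n) x" for n x
    unfolding P_def \<sigma>1_fun \<tau>_fun by (rule eigenpoly_solves_qEHT[OF q Lambda])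
  have orthogonal: "(\<Sum>k\<le>N. weight k * (poly (P n) (node k) * poly (P m) (node k))) = 0"
    if "m \<noteq> n" for m n
    using qEHT_eigenfunctions_orthogonal[OF eigen eigen] diag_coeff_inj[OF q Lambda] that
    by (simp add: mult.assoc)
  have "d n \<noteq> 0" if "n \<le> N" for n
    using weighted_norm_pos[of "P n"] q a that
    by (simp add: d_def P_def eigenpoly_nonzero degree_eigenpoly mult.assoc del: of_real_sum)
  moreover have "qinv_int q a2 N (\<lambda>x. of_real (poly (P n) x * poly (P m) x) *
          (exp (\<alpha> * of_real (ln \<bar>x\<bar>)) *
           of_real (exp (1/2 * (log q x - 1) * ln x)
                    * qpoch_inf (q * a2 / x) q * qpoch_inf (x / (a1 / q)) q)))
       = (if m = n then d n else 0)" for m n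
    using qinv_int_eq_weighted_sum[of \<alpha> "\<lambda>x. poly (P n) x * poly (P m) x"] alpha orthogonal[of m n]
    unfolding qalpha_def by (simp add: d_def del: of_real_sum)
  ultimately show ?thesis
    using eigen by (intro exI[of _ P] exI[of _ d]) (auto simp: P_def degree_eigenpoly qEHT_op_def diag_coeff_def)
qed

end
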